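(* Consider a Markov coding game and the MEME sender policy constructed from an MDP policy $\pi$ (as described in the context). Fix a time $t$, a history $h^t=(s^0,a^0,\dots,s^t)$ and the corresponding posterior $b^t$ over messages. For a decision rule $\sigma:\mathcal{M}\to\Delta(\mathcal{A})$, let $M\sim b^t$, $A^t\sim\sigma(M)$, $S^{t+1}\sim\mathcal{T}(s^t,A^t)$, and $H^{t+1}=(h^t,A^t,S^{t+1})$. Among all decision rules $\sigma$ satisfying the marginal constraint $\sum_{m} b^t(m)\sigma(m)(a)=\pi(s^t)(a)$ for all $a\in\mathcal{A}$, the MEME decision rule $\sigma(m)=\nu(A\mid M=m)$ with $\nu=\mathrm{MEC}(b^t,\pi(s^t))$ maximizes the mutual information $\mathcal{I}(M;H^{t+1}\mid b^t,h^t)$.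
   Context: A (finite, episodic) Markov decision process is $\langle \mathcal{S},\mathcal{A},\mathcal{R},\mathcal{T}\rangle$ with finite state set $\mathcal{S}$, finite action set $\mathcal{A}$, reward $\mathcal{R}:\mathcal{S}\times\mathcal{A}\to\mathbb{R}$ and transition function $\mathcal{T}:\mathcal{S}\times\mathcal{A}\to\Delta(\mathcal{S})$. A Markov coding game (MCG) is $\langle(\mathcal{S},\mathcal{A},\mathcal{T},\mathcal{R}),\mathcal{M},\mu,\zeta\rangle$ where $\mathcal{M}$ is a finite message set, $\mu\in\Delta(\mathcal{M})$ is the prior, and $\zeta\ge 0$. A message $M\sim\mu$ is revealed to the sender, who plays the MDP with a message-conditional policy, producing a trajectory observed by the receiver. A minimum entropy coupling $\mathrm{MEC}(p,q)$ of distributions $p\in\Delta(\mathcal{M})$ and $q\in\Delta(\mathcal{A})$ is a joint distribution $\nu$ on $\mathcal{M}\times\mathcal{A}$ whose marginals are $p$ and $q$ and whose joint entropy $\mathcal{H}(M,A)$ is minimal among all such joint distributions. MEME sender: given an MDP policy $\pi:\mathcal{S}\to\Delta(\mathcal{A})$, set $b^0=\mu$; at time $t$ in state $s^t$ with current posterior $b^t=\mathcal{P}(M\mid h^t,\pi_{\mid M}^{:t})$ over the message given the history and the sender's past policy, compute $\nu=\mathrm{MEC}(b^t,\pi(s^t))$ and act according to $\pi_{\mid M}(s^t,m)=\nu(A\mid M=m)$; the posterior is then updated by Bayes' rule. Mutual information is $\mathcal{I}(X;Y)=\mathcal{H}(X)-\mathcal{H}(X\mid Y)$ with $\mathcal{H}$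 the Shannon entropy. *)

theory Defs
  imports Complex_Main
begin

definition is_dist :: "('x::finite \<Rightarrow> real) \<Rightarrow> bool" where
  "is_dist p \<longleftrightarrow> (\<forall>x. 0 \<le> p x) \<and> (\<Sum>x\<in>UNIV. p x) = 1"

definition shannon_entropy :: "'x set \<Rightarrow> ('x \<Rightarrow> real) \<Rightarrow> real" where
  "shannon_entropy X p = - (\<Sum>x\<in>X. if p x = 0 then 0 else p x * log 2 (p x))"

definition couplings :: "('m::finite \<Rightarrow> real) \<Rightarrow> ('a::finite \<Rightarrow> real) \<Rightarrow> ('m \<Rightarrow> 'a \<Rightarrow> real) set" where
  "couplings p q = {\<nu>. (\<forall>m a. 0 \<le> \<nu> m a) \<and> (\<forall>m. (\<Sum>a\<in>UNIV. \<nu> m a) = p m)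
                        \<and> (\<forall>a. (\<Sum>m\<in>UNIV. \<nu> m a) = q a)}"

definition joint_entropy :: "('m::finite \<Rightarrow> 'a::finite \<Rightarrow> real) \<Rightarrow> real" where
  "joint_entropy \<nu> = shannon_entropy UNIV (\<lambda>(m, a). \<nu> m a)"

definition is_MEC :: "('m::finite \<Rightarrow> real) \<Rightarrow> ('a::finite \<Rightarrow> real) \<Rightarrow> ('m \<Rightarrow> 'a \<Rightarrow> real) \<Rightarrow> bool" where
  "is_MEC p q \<nu> \<longleftrightarrow> \<nu> \<in> couplings p q \<and> (\<forall>\<nu>'\<in>couplings p q. joint_entropy \<nu> \<le> joint_entropy \<nu>')"

text \<open>Mutual information I(X;Y) = H(X) - H(X|Y) of a joint distribution J supported on X \<times> Y.\<close>
definition mutual_information :: "'x set \<Rightarrow> 'y set \<Rightarrow> ('x \<Rightarrow> 'y \<Rightarrow> real) \<Rightarrow> real" where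
  "mutual_information X Y J =
     (let px = (\<lambda>x. \<Sum>y\<in>Y. J x y); py = (\<lambda>y. \<Sum>x\<in>X. J x y) in
      shannon_entropy X px
      - (- (\<Sum>x\<in>X. \<Sum>y\<in>Y. if J x y = 0 then 0 else J x y * log 2 (J x y / py y))))"

definition decision_rule :: "('m \<Rightarrow> 'a::finite \<Rightarrow> real) \<Rightarrow> bool" where
  "decision_rule \<sigma> \<longleftrightarrow> (\<forall>m. is_dist (\<sigma> m))"

definition marginal_constraint :: "('m::finite \<Rightarrow> real) \<Rightarrow> ('m \<Rightarrow> 'a \<Rightarrow> real) \<Rightarrow> ('a \<Rightarrow> real) \<Rightarrow> bool" where
  "marginal_constraint b \<sigma> q \<longleftrightarrow> (\<forall>a. (\<Sum>m\<in>UNIV. b m * \<sigma> m a) = q a)"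

text \<open>Histories h^t = (s^0,a^0,...,s^t) are represented as (list of (s^i,a^i) for i<t, s^t).
  H^{t+1} = (h^t, A^t, S^{t+1}).\<close>
type_synonym ('s, 'a) history = "('s \<times> 'a) list \<times> 's"

definition next_history_values :: "('s, 'a) history \<Rightarrow> (('s, 'a) history \<times> 'a \<times> 's) set" where
  "next_history_values h = {(h, a, s') | a s'. True}"

definition next_history_joint ::
  "('s \<Rightarrow> 'a \<Rightarrow> 's \<Rightarrow> real) \<Rightarrow> ('s, 'a) history \<Rightarrow> ('m \<Rightarrow> real) \<Rightarrow> ('m \<Rightarrow> 'a \<Rightarrow> real)
     \<Rightarrow> 'm \<Rightarrow> (('s, 'a) history \<times> 'a \<times> 's) \<Rightarrow> real" where
  "next_history_joint T h b \<sigma> m y =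
     (case y of (h', a, s') \<Rightarrow> if h' = h then b m * \<sigma> m a * T (snd h) a s' else 0)"

definition info_next_history ::
  "('s::finite \<Rightarrow> 'a::finite \<Rightarrow> 's \<Rightarrow> real) \<Rightarrow> ('s, 'a) history \<Rightarrow> ('m::finite \<Rightarrow> real)
     \<Rightarrow> ('m \<Rightarrow> 'a \<Rightarrow> real) \<Rightarrow> real" where
  "info_next_history T h b \<sigma> =
     mutual_information UNIV (next_history_values h) (next_history_joint T h b \<sigma>)"

end

theory Submission
  imports Defs
begin

text \<open>Since the next state is produced from the action by the transition kernel alone and
  the action can be read off the next history, the information the next history carries about
  M is I(M; A) = H(M) + H(A) - H(M, A). Under the marginal constraint both H(M) = H(b) and
  H(A) = H(\<pi>(s)) are fixed, and the joint law of (M, A) ranges over the couplings of b and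
  \<pi>(s); so maximising the information means minimising the joint entropy, which the MEME rule
  does by construction.\<close>

lemma shannon_entropy_eq: "shannon_entropy X p = - (\<Sum>x\<in>X. p x * log 2 (p x))"
  unfolding shannon_entropy_def by (intro arg_cong[where f=uminus] sum.cong) auto

lemma mutual_information_reindex:
  assumes "inj_on f Y"
  shows "mutual_information X (f ` Y) J = mutual_information X Y (\<lambda>x y. J x (f y))"
  unfolding mutual_information_def Let_def sum.reindex[OF assms] by (simp add: comp_def)

lemma mutual_information_channel:
  fixes v :: "'m::finite \<Rightarrow> 'a::finite \<Rightarrow> real" and K :: "'a \<Rightarrow> 's::finite \<Rightarrow> real"
  assumes K_sum: "\<And>a. (\<Sum>s\<in>UNIV. K a s) = 1"
  shows "mutual_information UNIV UNIV (\<lambda>m (a, s). v m a * K a s) = mutual_information UNIV UNIV v"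
proof -
  define q where "q a = (\<Sum>m\<in>UNIV. v m a)" for a
  have sum_pairs: "(\<Sum>y\<in>UNIV. g y) = (\<Sum>a\<in>UNIV. \<Sum>s\<in>UNIV. g (a, s))" for g :: "'a \<times> 's \<Rightarrow> real"
    by (simp add: UNIV_Times_UNIV[symmetric] sum.cartesian_product del: UNIV_Times_UNIV)
  have sum_K: "(\<Sum>s\<in>UNIV. K a s * c) = c" for a c
    by (simp add: K_sum flip: sum_distrib_right)
  have row: "(\<Sum>s\<in>UNIV. v m a * K a s) = v m a" for m a
    using sum_K[of a "v m a"] by (simp add: mult.commute)
  have col: "(\<Sum>m\<in>UNIV. v m a * K a s) = q a * K a s" for a s
    by (simp add: q_def sum_distrib_right)
  \<comment> \<open>The factor K a s cancels inside the logarithm, whatever the sign of q a.\<close>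
  have log_term: "(if v m a * K a s = 0 then 0 else v m a * K a s * log 2 (v m a * K a s / (q a * K a s)))
      = K a s * (if v m a = 0 then 0 else v m a * log 2 (v m a / q a))" for m a s
    by (cases "K a s = 0") auto
  show ?thesis
    unfolding mutual_information_def Let_def sum_pairs prod.case row col log_term sum_K
    by (simp only: q_def)
qed

lemma mutual_information_eq_entropies:
  fixes v :: "'m::finite \<Rightarrow> 'a::finite \<Rightarrow> real"
  assumes v_nonneg: "\<And>m a. 0 \<le> v m a"
  shows "mutual_information UNIV UNIV v = shannon_entropy UNIV (\<lambda>m. \<Sum>a\<in>UNIV. v m a)
      + shannon_entropy UNIV (\<lambda>a. \<Sum>m\<in>UNIV. v m a) - joint_entropy v"
proof -
  define q where "q a = (\<Sum>m\<in>UNIV. v m a)" for a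
  have log_term: "(if v m a = 0 then 0 else v m a * log 2 (v m a / q a))
      = v m a * log 2 (v m a) - v m a * log 2 (q a)" for m a
  proof (cases "v m a = 0")
    case False
    then have v_pos: "0 < v m a" using v_nonneg[of m a] by simp
    have "v m a \<le> q a" unfolding q_def by (rule member_le_sum) (auto simp: v_nonneg)
    with v_pos show ?thesis by (simp add: log_divide right_diff_distrib)
  qed simp
  have cross: "(\<Sum>m\<in>UNIV. \<Sum>a\<in>UNIV. v m a * log 2 (q a)) = (\<Sum>a\<in>UNIV. q a * log 2 (q a))"
    by (subst sum.swap) (simp add: q_def sum_distrib_right)
  have joint: "joint_entropy v = - (\<Sum>m\<in>UNIV. \<Sum>a\<in>UNIV. v m a * log 2 (v m a))"
    unfolding joint_entropy_def shannon_entropy_eq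
    by (simp add: UNIV_Times_UNIV[symmetric] sum.cartesian_product split_def del: UNIV_Times_UNIV)
  show ?thesis
    unfolding mutual_information_def Let_def q_def[symmetric] log_term sum_subtractf cross joint
    by (simp add: shannon_entropy_eq)
qed

lemma info_next_history_eq_entropies:
  fixes T :: "'s::finite \<Rightarrow> 'a::finite \<Rightarrow> 's \<Rightarrow> real" and b :: "'m::finite \<Rightarrow> real"
  assumes T_sum: "\<And>s a. (\<Sum>s'\<in>UNIV. T s a s') = 1"
    and b_nonneg: "\<And>m. 0 \<le> b m"
    and \<sigma>: "decision_rule \<sigma>"
  shows "info_next_history T h b \<sigma> = shannon_entropy UNIV b
      + shannon_entropy UNIV (\<lambda>a. \<Sum>m\<in>UNIV. b m * \<sigma> m a)
      - joint_entropy (\<lambda>m a. b m * \<sigma> m a)"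
proof -
  have \<sigma>_nonneg: "\<And>m a. 0 \<le> \<sigma> m a" and \<sigma>_sum: "\<And>m. (\<Sum>a\<in>UNIV. \<sigma> m a) = 1"
    using \<sigma> by (auto simp: decision_rule_def is_dist_def)
  have next_values: "next_history_values h = (\<lambda>(a, s'). (h, a, s')) ` UNIV"
    unfolding next_history_values_def by auto
  have inj: "inj_on (\<lambda>(a, s'). (h, a, s')) UNIV"
    by (auto simp: inj_on_def)
  have joint: "(\<lambda>m y. next_history_joint T h b \<sigma> m ((\<lambda>(a, s'). (h, a, s')) y))
      = (\<lambda>m (a, s'). b m * \<sigma> m a * T (snd h) a s')"
    by (auto simp: next_history_joint_def fun_eq_iff)
  have "info_next_history T h b \<sigma> = mutual_information UNIV UNIV (\<lambda>m a. b m * \<sigma> m a)"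
    unfolding info_next_history_def next_values mutual_information_reindex[OF inj] joint
    by (rule mutual_information_channel) (rule T_sum)
  also have "\<dots> = shannon_entropy UNIV b + shannon_entropy UNIV (\<lambda>a. \<Sum>m\<in>UNIV. b m * \<sigma> m a)
      - joint_entropy (\<lambda>m a. b m * \<sigma> m a)"
    by (subst mutual_information_eq_entropies)
      (simp_all add: b_nonneg \<sigma>_nonneg \<sigma>_sum flip: sum_distrib_left)
  finally show ?thesis .
qed

lemma decision_rule_coupling:
  assumes b_nonneg: "\<And>m. 0 \<le> b m"
    and \<sigma>: "decision_rule \<sigma>"
    and marginal: "marginal_constraint b \<sigma> q"
  shows "(\<lambda>m a. b m * \<sigma> m a) \<in> couplings b q"
  using assms by (simp add: couplings_def decision_rule_def is_dist_def marginal_constraint_def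
      flip: sum_distrib_left)

lemma coupling_eq_mult_conditional:
  assumes \<nu>: "\<nu> \<in> couplings b q"
    and b_nonneg: "\<And>m. 0 \<le> b m"
    and conditional: "\<And>m a. 0 < b m \<Longrightarrow> \<sigma> m a = \<nu> m a / b m"
  shows "(\<lambda>m a. b m * \<sigma> m a) = \<nu>"
proof (intro ext)
  fix m a
  show "b m * \<sigma> m a = \<nu> m a"
  proof (cases "b m = 0")
    case True
    have "\<And>a. 0 \<le> \<nu> m a" and "(\<Sum>a\<in>UNIV. \<nu> m a) = b m"
      using \<nu> by (auto simp: couplings_def)
    with True have "\<nu> m a = 0" by (simp add: sum_nonneg_eq_0_iff)
    with True show ?thesis by simp
  next
    case False
    with b_nonneg[of m] show ?thesis by (simp add: conditional)
  qed
qed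

theorem proposition3:
  fixes T :: "'s::finite \<Rightarrow> 'a::finite \<Rightarrow> 's \<Rightarrow> real"
    and \<pi> :: "'s \<Rightarrow> 'a \<Rightarrow> real"
    and h :: "('s, 'a) history"
    and b :: "'m::finite \<Rightarrow> real"
    and \<nu> :: "'m \<Rightarrow> 'a \<Rightarrow> real"
    and \<sigma>\<^sub>M\<^sub>E\<^sub>M\<^sub>E :: "'m \<Rightarrow> 'a \<Rightarrow> real"
  assumes T_dist: "\<forall>s a. is_dist (T s a)"
    and \<pi>_dist: "\<forall>s. is_dist (\<pi> s)"
    and b_dist: "is_dist b"
    and MEC: "is_MEC b (\<pi> (snd h)) \<nu>"
    and meme_rule: "decision_rule \<sigma>\<^sub>M\<^sub>E\<^sub>M\<^sub>E"
    and meme_cond: "\<forall>m a. 0 < b m \<longrightarrow> \<sigma>\<^sub>M\<^sub>E\<^sub>M\<^sub>E m a = \<nu> m a / b m"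
  shows "marginal_constraint b \<sigma>\<^sub>M\<^sub>E\<^sub>M\<^sub>E (\<pi> (snd h)) \<and>
         (\<forall>\<sigma>. decision_rule \<sigma> \<and> marginal_constraint b \<sigma> (\<pi> (snd h)) \<longrightarrow>
               info_next_history T h b \<sigma> \<le> info_next_history T h b \<sigma>\<^sub>M\<^sub>E\<^sub>M\<^sub>E)"
proof -
  have b_nonneg: "\<And>m. 0 \<le> b m" and T_sum: "\<And>s a. (\<Sum>s'\<in>UNIV. T s a s') = 1"
    using b_dist T_dist by (auto simp: is_dist_def)
  have \<nu>: "\<nu> \<in> couplings b (\<pi> (snd h))"
    and \<nu>_min: "\<And>\<nu>'. \<nu>' \<in> couplings b (\<pi> (snd h)) \<Longrightarrow> joint_entropy \<nu> \<le> joint_entropy \<nu>'"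
    using MEC by (auto simp: is_MEC_def)
  have meme_joint: "(\<lambda>m a. b m * \<sigma>\<^sub>M\<^sub>E\<^sub>M\<^sub>E m a) = \<nu>"
    using coupling_eq_mult_conditional[OF \<nu> b_nonneg] meme_cond by blast
  have meme_marginal: "marginal_constraint b \<sigma>\<^sub>M\<^sub>E\<^sub>M\<^sub>E (\<pi> (snd h))"
    using \<nu> meme_joint by (simp add: marginal_constraint_def couplings_def fun_eq_iff)
  have "info_next_history T h b \<sigma> \<le> info_next_history T h b \<sigma>\<^sub>M\<^sub>E\<^sub>M\<^sub>E"
    if \<sigma>: "decision_rule \<sigma>" and marginal: "marginal_constraint b \<sigma> (\<pi> (snd h))" for \<sigma>
  proof -
    have "joint_entropy \<nu> \<le> joint_entropy (\<lambda>m a. b m * \<sigma> m a)"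
      by (rule \<nu>_min[OF decision_rule_coupling[OF b_nonneg \<sigma> marginal]])
    with marginal meme_marginal show ?thesis
      unfolding info_next_history_eq_entropies[OF T_sum b_nonneg \<sigma>]
        info_next_history_eq_entropies[OF T_sum b_nonneg meme_rule] meme_joint
      by (simp add: marginal_constraint_def)
  qed
  with meme_marginal show ?thesis by blast
qed

end
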